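(* Let $\mu$ be a $(C,\gamma)$-absolutely decaying measure on $\mathbb{R}$, let $K=\operatorname{supp}\mu$, and let $0<\alpha\le\frac14\left(\frac{1}{3C}\right)^{1/\gamma}$. Then for every bi-Lipschitz map $\varphi:\mathbb{R}\to\mathbb{R}$, the set $\varphi(\mathbf{BA})$ is $\alpha$-winning on $K$.
   Context: $\mathbf{BA}=\{x\in\mathbb{R}:\exists c=c(x)>0 \text{ with } |x-p/q|>c/q^2\ \forall (p,q)\in\mathbb{Z}\times\mathbb{N}\}$ is the set of badly approximable numbers. $B(x,\rho)$ denotes the closed ball. A locally finite Borel measure $\mu$ on $\mathbb{R}$ is $(C,\gamma)$-absolutely decaying if there is $\rho_0>0$ such that for all $0<\rho\le\rho_0$, $x\in\operatorname{supp}\mu$, $y\in\mathbb{R}$, $\varepsilon>0$: $\mu(B(x,\rho)\cap B(y,\varepsilon\rho))<C\varepsilon^\gamma\mu(B(x,\rho))$. A map $\varphi$ is bi-Lipschitz if there is $L\ge1$ with $L^{-1}\le|\varphi(x)-\varphi(y)|/|x-y|\le L$ for all $x\ne y$. Schmidt's game on a complete metric space $(X,d)$ with parameters $0<\alpha,\beta<1$ and target $S\subset X$: on $X\times\mathbb{R}_+$ write $(x_2,\rho_2)\le_s(x_1,\rho_1)$ if $\rho_2+d(x_1,x_2)\le\rho_1$. Bob picks $\omega_1=(x_1,\rho_1)$; then Alice and Bob alternately pick $\omega_k'=(x_k',\rho_k')\le_s\omega_k$ with $\rho_k'=\alpha\rho_k$ and $\omega_{k+1}\le_s\omega_k'$ with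 $\rho_{k+1}=\beta\rho_k'$. The nested closed balls intersect in a point $x_\infty$; Alice wins if $x_\infty\in S$. $S$ is $\alpha$-winning if for every $\beta\in(0,1)$ Alice has a strategy winning against all plays of Bob. For closed $K\subset\mathbb{R}$, $S\subset\mathbb{R}$ is $\alpha$-winning on $K$ if $S\cap K$ is $\alpha$-winning for the game played on $K$ with the induced metric. *)

theory Defs
  imports "HOL-Analysis.Analysis"
begin

definition BA :: "real set" where
  "BA = {x. \<exists>c>0. \<forall>(p::int) (q::nat). q > 0 \<longrightarrow> \<bar>x - real_of_int p / real q\<bar> > c / (real q)^2}"

definition locally_finite_borel :: "real measure \<Rightarrow> bool" where
  "locally_finite_borel M \<longleftrightarrow> sets M = sets borel \<and>
     (\<forall>x. \<exists>e>0. emeasure M (ball x e) < \<infinity>)"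

definition msupp :: "real measure \<Rightarrow> real set" where
  "msupp M = {x. \<forall>e>0. emeasure M (ball x e) > 0}"

definition abs_decaying :: "real measure \<Rightarrow> real \<Rightarrow> real \<Rightarrow> bool" where
  "abs_decaying M C \<gamma> \<longleftrightarrow> (\<exists>\<rho>0>0. \<forall>\<rho> x y \<epsilon>. 0 < \<rho> \<and> \<rho> \<le> \<rho>0 \<and> x \<in> msupp M \<and> \<epsilon> > 0 \<longrightarrow>
      emeasure M (cball x \<rho> \<inter> cball y (\<epsilon> * \<rho>)) < ennreal (C * \<epsilon> powr \<gamma>) * emeasure M (cball x \<rho>))"

definition bi_lipschitz :: "(real \<Rightarrow> real) \<Rightarrow> bool" where
  "bi_lipschitz \<phi> \<longleftrightarrow> (\<exists>L\<ge>1. \<forall>x y. x \<noteq> y \<longrightarrow>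
      1 / L \<le> \<bar>\<phi> x - \<phi> y\<bar> / \<bar>x - y\<bar> \<and> \<bar>\<phi> x - \<phi> y\<bar> / \<bar>x - y\<bar> \<le> L)"

text \<open>Schmidt's game on a closed set K (induced metric). A pair (x, r) stands for the closed
  ball of K with centre x and radius r.  (x2,r2) \<le>s (x1,r1) iff r2 + d(x1,x2) \<le> r1.\<close>
definition s_le :: "real \<times> real \<Rightarrow> real \<times> real \<Rightarrow> bool" where
  "s_le w2 w1 \<longleftrightarrow> snd w2 + dist (fst w1) (fst w2) \<le> snd w1"

definition legal_move :: "real set \<Rightarrow> real \<Rightarrow> real \<times> real \<Rightarrow> real \<times> real \<Rightarrow> bool" where
  "legal_move K c w w' \<longleftrightarrow> fst w' \<in> K \<and> snd w' = c * snd w \<and> s_le w' w"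

text \<open>Alice's k-th move answers Bob's moves
  b 0, ..., b k.\<close>
definition alpha_winning_on :: "real set \<Rightarrow> real \<Rightarrow> real set \<Rightarrow> bool" where
  "alpha_winning_on K \<alpha> S \<longleftrightarrow>
    (\<forall>\<beta>. 0 < \<beta> \<and> \<beta> < 1 \<longrightarrow>
      (\<exists>\<sigma> :: (real \<times> real) list \<Rightarrow> real \<times> real.
        \<forall>b :: nat \<Rightarrow> real \<times> real.
          let a = (\<lambda>k. \<sigma> (map b [0..<Suc k])) in
          let bob_ok = (\<lambda>k. fst (b 0) \<in> K \<and> snd (b 0) > 0 \<and>
                               (\<forall>j<k. legal_move K \<beta> (a j) (b (Suc j)))) in
          (\<forall>k. bob_ok k \<longrightarrow> legal_move K \<alpha> (b k) (a k)) \<and>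
          ((\<forall>k. bob_ok k) \<longrightarrow>
             (\<forall>x\<in>K. (\<forall>k. dist (fst (b k)) x \<le> snd (b k)) \<longrightarrow> x \<in> S))))"

end

theory Submission
  imports Defs
begin

text \<open>Alice answers Bob's ball \<open>B(x, r)\<close> by a ball that keeps distance \<open>2\<alpha>r\<close> from every
  \<open>\<phi>(p/q)\<close> with \<open>8Lrq\<^sup>2 \<le> 1\<close>. Distinct such rationals are \<open>8Lr\<close> apart, so by the lower
  Lipschitz bound at most one of their images lies within \<open>2r\<close> of \<open>x\<close>, and absolute decay yields
  a point of the support in \<open>B(x, (1 - \<alpha>)r)\<close> more than \<open>3\<alpha>r\<close> away from it. For a fixed \<open>p/q\<close>,
  the first radius of the play below \<open>1/(8Lq\<^sup>2)\<close> is still of order \<open>1/q\<^sup>2\<close>, so the outcome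
  \<open>\<phi>(t)\<close> stays \<open>c/q\<^sup>2\<close> away from \<open>\<phi>(p/q)\<close>, and \<open>t \<in> BA\<close> by the upper Lipschitz bound.\<close>

lemma bi_lipschitz_bounds:
  assumes "bi_lipschitz \<phi>"
  obtains L where "L \<ge> 1" "\<And>s t. \<bar>s - t\<bar> \<le> L * \<bar>\<phi> s - \<phi> t\<bar>"
    "\<And>s t. \<bar>\<phi> s - \<phi> t\<bar> \<le> L * \<bar>s - t\<bar>"
proof -
  obtain L where L: "L \<ge> 1" and ratio: "\<And>s t. s \<noteq> t \<Longrightarrow>
      1 / L \<le> \<bar>\<phi> s - \<phi> t\<bar> / \<bar>s - t\<bar> \<and> \<bar>\<phi> s - \<phi> t\<bar> / \<bar>s - t\<bar> \<le> L"
    using assms unfolding bi_lipschitz_def by blast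
  have "\<bar>s - t\<bar> \<le> L * \<bar>\<phi> s - \<phi> t\<bar> \<and> \<bar>\<phi> s - \<phi> t\<bar> \<le> L * \<bar>s - t\<bar>" for s t
  proof (cases "s = t")
    case False
    with ratio[of s t] L show ?thesis by (simp add: field_simps)
  qed simp
  with L show thesis using that by blast
qed

lemma bi_lipschitz_surj:
  fixes \<phi> :: "real \<Rightarrow> real"
  assumes "bi_lipschitz \<phi>"
  shows "surj \<phi>"
proof -
  obtain L where L: "L \<ge> 1" and lower: "\<And>s t. \<bar>s - t\<bar> \<le> L * \<bar>\<phi> s - \<phi> t\<bar>"
    and upper: "\<And>s t. \<bar>\<phi> s - \<phi> t\<bar> \<le> L * \<bar>s - t\<bar>"
    using bi_lipschitz_bounds[OF assms] by blast
  have cont: "continuous_on S \<phi>" for S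
    by (rule lipschitz_on_continuous_on[of L]) (use L upper in \<open>auto simp: lipschitz_on_def dist_real_def\<close>)
  have inj: "inj \<phi>"
  proof (rule injI)
    fix s t assume "\<phi> s = \<phi> t"
    then show "s = t" using lower[of s t] by simp
  qed
  have "v \<in> range \<phi>" for v
  proof -
    define T where "T = L * (\<bar>v - \<phi> 0\<bar> + 1)"
    have T: "T > 0" using L by (simp add: T_def)
    have far: "\<bar>v - \<phi> 0\<bar> < \<bar>\<phi> t - \<phi> 0\<bar>" if "\<bar>t\<bar> = T" for t
      using lower[of t 0] that L by (simp add: T_def mult_le_cancel_left)
    have "(\<phi> (-T) < \<phi> 0 \<and> \<phi> 0 < \<phi> T) \<or> (\<phi> T < \<phi> 0 \<and> \<phi> 0 < \<phi> (-T))"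
      by (rule continuous_inj_imp_mono[OF _ _ cont]) (use T inj in \<open>auto intro: inj_on_subset\<close>)
    with far[of T] far[of "-T"] T have "v \<in> closed_segment (\<phi> (-T)) (\<phi> T)"
      by (auto simp: closed_segment_eq_real_ivl)
    then show ?thesis using IVT'_closed_segment_real[OF _ cont] by blast
  qed
  then show ?thesis by blast
qed

lemma msupp_meets_positive:
  assumes sets: "sets M = sets borel" and A: "A \<in> sets borel" and pos: "emeasure M A > 0"
  shows "A \<inter> msupp M \<noteq> {}"
proof
  assume disj: "A \<inter> msupp M = {}"
  define I where "I = {(q, r). q \<in> \<rat> \<and> r \<in> \<rat> \<and> emeasure M (ball q r) = 0}"
  have "countable I"
    by (rule countable_subset[of _ "\<rat> \<times> \<rat>"]) (auto simp: I_def countable_rat)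
  then have null: "(\<Union>(q, r)\<in>I. ball q r) \<in> null_sets M"
    by (rule null_sets_UN') (auto simp: I_def null_sets_def sets)
  have "A \<subseteq> (\<Union>(q, r)\<in>I. ball q r)"
  proof
    fix a assume "a \<in> A"
    with disj obtain e where e: "e > 0" "emeasure M (ball a e) = 0"
      unfolding msupp_def using not_gr_zero by blast
    obtain q where q: "q \<in> \<rat>" "a - e/3 < q" "q < a + e/3"
      using Rats_dense_in_real[of "a - e/3" "a + e/3"] e by auto
    obtain r where r: "r \<in> \<rat>" "e/3 < r" "r < 2*e/3"
      using Rats_dense_in_real[of "e/3" "2*e/3"] e by auto
    have "ball q r \<subseteq> ball a e"
      using q r by (auto simp: dist_real_def)
    then have "emeasure M (ball q r) \<le> emeasure M (ball a e)"
      by (rule emeasure_mono) (simp add: sets)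
    with e q r have "(q, r) \<in> I" by (simp add: I_def)
    moreover have "a \<in> ball q r" using q r by (auto simp: dist_real_def)
    ultimately show "a \<in> (\<Union>(q, r)\<in>I. ball q r)" by blast
  qed
  with null A sets have "A \<in> null_sets M" by (auto intro: null_sets_subset)
  with pos show False by (simp add: null_setsD1)
qed

definition abs_decaying_upto :: "real measure \<Rightarrow> real \<Rightarrow> real \<Rightarrow> real \<Rightarrow> bool" where
  "abs_decaying_upto M C \<gamma> \<rho>0 \<longleftrightarrow> (\<forall>\<rho> x y \<epsilon>. 0 < \<rho> \<and> \<rho> \<le> \<rho>0 \<and> x \<in> msupp M \<and> \<epsilon> > 0 \<longrightarrow>
      emeasure M (cball x \<rho> \<inter> cball y (\<epsilon> * \<rho>)) < ennreal (C * \<epsilon> powr \<gamma>) * emeasure M (cball x \<rho>))"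

lemma abs_decaying_iff: "abs_decaying M C \<gamma> \<longleftrightarrow> (\<exists>\<rho>0>0. abs_decaying_upto M C \<gamma> \<rho>0)"
  unfolding abs_decaying_def abs_decaying_upto_def ..

lemma abs_decaying_upto_const_gt_1:
  assumes "abs_decaying_upto M C \<gamma> \<rho>0" "0 < \<rho>0" "x \<in> msupp M"
  shows "C > 1"
proof (rule ccontr)
  assume "\<not> C > 1"
  then have "ennreal C * emeasure M (cball x \<rho>0) \<le> emeasure M (cball x \<rho>0)"
    using mult_right_mono[of "ennreal C" 1] by simp
  moreover have "emeasure M (cball x \<rho>0 \<inter> cball x (1 * \<rho>0))
      < ennreal (C * 1 powr \<gamma>) * emeasure M (cball x \<rho>0)"
    using assms(2,3) by (intro assms(1)[unfolded abs_decaying_upto_def, rule_format]) simp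
  then have "emeasure M (cball x \<rho>0) < ennreal C * emeasure M (cball x \<rho>0)"
    by simp
  ultimately show False by simp
qed

lemma abs_decaying_upto_escape:
  assumes sets: "sets M = sets borel" and decay: "abs_decaying_upto M C \<gamma> \<rho>0"
    and \<epsilon>: "0 < \<epsilon>" "C * \<epsilon> powr \<gamma> \<le> 1"
    and x: "x \<in> msupp M" and \<rho>: "0 < \<rho>" "\<rho> \<le> \<rho>0"
  shows "\<exists>x'\<in>msupp M. dist x x' \<le> \<rho> \<and> \<epsilon> * \<rho> < dist x' y"
proof -
  define A B where "A = cball x \<rho>" and "B = cball y (\<epsilon> * \<rho>)"
  have "emeasure M (A \<inter> B) < ennreal (C * \<epsilon> powr \<gamma>) * emeasure M A"
    using decay x \<epsilon> \<rho> unfolding abs_decaying_upto_def A_def B_def by blast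
  also have "\<dots> \<le> emeasure M A"
    using mult_right_mono[of "ennreal (C * \<epsilon> powr \<gamma>)" 1] \<epsilon> by simp
  finally have "emeasure M (A \<inter> B) < emeasure M A" .
  moreover have "emeasure M A \<le> emeasure M (A \<inter> B) + emeasure M (A - B)"
    using emeasure_subadditive[of "A \<inter> B" M "A - B"] by (simp add: sets A_def B_def Int_Diff_Un)
  ultimately have "emeasure M (A - B) > 0"
    by (metis add.right_neutral leD not_gr_zero)
  then have "(A - B) \<inter> msupp M \<noteq> {}"
    by (rule msupp_meets_positive[OF sets, rotated]) (simp add: A_def B_def)
  then show ?thesis by (force simp: A_def B_def dist_commute)
qed

lemma abs_decaying_upto_escape_ball:
  assumes sets: "sets M = sets borel" and decay: "abs_decaying_upto M C \<gamma> \<rho>0"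
    and C: "0 < C" and \<gamma>: "0 < \<gamma>"
    and \<alpha>: "0 < \<alpha>" "\<alpha> \<le> 1/4" "\<alpha> \<le> 1/4 * (1 / (3 * C)) powr (1 / \<gamma>)"
    and x: "x \<in> msupp M" and r: "0 < r" "r \<le> \<rho>0"
  shows "\<exists>x'\<in>msupp M. dist x x' \<le> (1 - \<alpha>) * r \<and> 3 * \<alpha> * r < dist x' y"
proof -
  define \<epsilon> where "\<epsilon> = 3 * \<alpha> / (1 - \<alpha>)"
  have \<epsilon>: "0 < \<epsilon>" "\<epsilon> \<le> 4 * \<alpha>" "\<epsilon> * ((1 - \<alpha>) * r) = 3 * \<alpha> * r"
    using \<alpha> by (auto simp: \<epsilon>_def field_simps)
  have "\<epsilon> powr \<gamma> \<le> ((1 / (3 * C)) powr (1 / \<gamma>)) powr \<gamma>"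
    using \<epsilon> \<alpha> \<gamma> by (intro powr_mono2) auto
  also have "\<dots> = 1 / (3 * C)"
    using C \<gamma> by (simp add: powr_powr)
  finally have decay_small: "C * \<epsilon> powr \<gamma> \<le> 1"
    using C by (simp add: field_simps)
  have "(1 - \<alpha>) * r \<le> 1 * r"
    using \<alpha> r by (intro mult_right_mono) auto
  with r have "(1 - \<alpha>) * r \<le> \<rho>0" by linarith
  moreover have "0 < (1 - \<alpha>) * r"
    using \<alpha> r by simp
  ultimately show ?thesis
    using abs_decaying_upto_escape[OF sets decay \<epsilon>(1) decay_small x, of "(1 - \<alpha>) * r" y] \<epsilon>(3)
    by simp
qed

lemma rationals_far_apart:
  fixes p p' :: int and q q' :: nat
  assumes q: "0 < q" "0 < q'" and ne: "p / q \<noteq> p' / q'"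
  shows "1 / (q * q') \<le> \<bar>p / q - p' / q'\<bar>"
proof -
  have diff: "p / q - p' / q' = of_int (p * q' - p' * q) / (q * q')"
    using q by (simp add: field_simps)
  have "p * q' - p' * q \<noteq> 0"
  proof
    assume "p * q' - p' * q = 0"
    with diff ne show False by simp
  qed
  then have "1 \<le> \<bar>of_int (p * q' - p' * q) :: real\<bar>" by linarith
  with q show ?thesis by (simp add: diff abs_div divide_right_mono)
qed

lemma geometric_radius_at_scale:
  fixes c r0 s :: real
  assumes c: "0 < c" "c < 1" and "0 < r0" "0 < s"
  obtains k where "c ^ k * r0 \<le> s" "c * min r0 s \<le> c ^ k * r0"
proof -
  have "\<exists>n. c ^ n < s / r0"
    using real_arch_pow_inv[of "s / r0" c] assms by auto
  then have ex: "\<exists>n. c ^ n * r0 \<le> s"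
    using \<open>0 < r0\<close> by (auto simp: field_simps intro: less_imp_le)
  define k where "k = (LEAST n. c ^ n * r0 \<le> s)"
  have "c ^ k * r0 \<le> s" unfolding k_def by (rule LeastI_ex[OF ex])
  moreover have "c * min r0 s \<le> c ^ k * r0"
  proof (cases k)
    case 0
    have "c * min r0 s \<le> 1 * r0"
      using assms by (intro mult_mono) auto
    with 0 show ?thesis by simp
  next
    case (Suc j)
    then have "s < c ^ j * r0" using not_less_Least[of j "\<lambda>n. c ^ n * r0 \<le> s"] by (auto simp: k_def)
    with Suc c show ?thesis by (simp add: min_le_iff_disj)
  qed
  ultimately show thesis by (rule that)
qed

definition bad_approx_by :: "(real \<Rightarrow> real) \<Rightarrow> real set" where
  "bad_approx_by \<phi> =
    {x. \<exists>c>0. \<forall>(p::int) (q::nat). 0 < q \<longrightarrow> c / (real q)\<^sup>2 < dist x (\<phi> (p / q))}"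

lemma bad_approx_by_subset_image_BA:
  fixes \<phi> :: "real \<Rightarrow> real"
  assumes "surj \<phi>" and "0 < L" and upper: "\<And>s t. \<bar>\<phi> s - \<phi> t\<bar> \<le> L * \<bar>s - t\<bar>"
  shows "bad_approx_by \<phi> \<subseteq> \<phi> ` BA"
proof
  fix x assume "x \<in> bad_approx_by \<phi>"
  then obtain c where c: "0 < c" "\<And>(p::int) (q::nat). 0 < q \<Longrightarrow> c / (real q)\<^sup>2 < dist x (\<phi> (p / q))"
    unfolding bad_approx_by_def by blast
  obtain t where t: "x = \<phi> t" using \<open>surj \<phi>\<close> by (metis surjD)
  have approx: "c / L / (real q)\<^sup>2 < \<bar>t - p / q\<bar>" if "0 < q" for p :: int and q :: nat
  proof -
    have "c / (real q)\<^sup>2 < L * \<bar>t - p / q\<bar>"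
      using c(2)[OF that, of p] upper[of t "p / q"] by (simp add: t dist_real_def)
    with \<open>0 < L\<close> that show ?thesis by (simp add: field_simps)
  qed
  have "t \<in> BA"
    unfolding BA_def using c(1) \<open>0 < L\<close> approx by (intro CollectI exI[of _ "c / L"]) simp
  with t show "x \<in> \<phi> ` BA" by blast
qed

definition legal_play :: "real set \<Rightarrow> real \<Rightarrow> (real \<times> real \<Rightarrow> real \<times> real) \<Rightarrow> (nat \<Rightarrow> real \<times> real) \<Rightarrow> bool"
  where "legal_play K \<beta> A b \<longleftrightarrow>
    fst (b 0) \<in> K \<and> 0 < snd (b 0) \<and> (\<forall>j. legal_move K \<beta> (A (b j)) (b (Suc j)))"

lemma legal_play_prefix:
  assumes legal: "\<And>w. fst w \<in> K \<Longrightarrow> 0 < snd w \<Longrightarrow> legal_move K \<alpha> w (A w)"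
    and "0 < \<alpha>" "0 < \<beta>" and start: "fst (b 0) \<in> K" "0 < snd (b 0)"
    and bob: "\<forall>j<k. legal_move K \<beta> (A (b j)) (b (Suc j))"
  shows "fst (b k) \<in> K \<and> snd (b k) = (\<alpha> * \<beta>) ^ k * snd (b 0)"
  using bob
proof (induction k)
  case (Suc k)
  then have IH: "fst (b k) \<in> K" "snd (b k) = (\<alpha> * \<beta>) ^ k * snd (b 0)" by simp_all
  with start \<open>0 < \<alpha>\<close> \<open>0 < \<beta>\<close> have "0 < snd (b k)" by simp
  with legal IH have "snd (A (b k)) = \<alpha> * snd (b k)" by (simp add: legal_move_def)
  moreover have "legal_move K \<beta> (A (b k)) (b (Suc k))" using Suc.prems by simp
  ultimately show ?case using IH by (simp add: legal_move_def)
qed (simp add: start)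

lemma alpha_winning_on_positional:
  assumes "0 < \<alpha>" and legal: "\<And>w. fst w \<in> K \<Longrightarrow> 0 < snd w \<Longrightarrow> legal_move K \<alpha> w (A w)"
    and wins: "\<And>\<beta> b x. 0 < \<beta> \<Longrightarrow> \<beta> < 1 \<Longrightarrow> legal_play K \<beta> A b \<Longrightarrow> x \<in> K \<Longrightarrow>
      (\<And>k. dist (fst (b k)) x \<le> snd (b k)) \<Longrightarrow> x \<in> S"
  shows "alpha_winning_on K \<alpha> S"
proof -
  have alice: "legal_move K \<alpha> (b k) (A (b k))"
    if "0 < \<beta>" "fst (b 0) \<in> K" "0 < snd (b 0)" "\<forall>j<k. legal_move K \<beta> (A (b j)) (b (Suc j))"
    for \<beta> b k
    using legal_play_prefix[OF legal \<open>0 < \<alpha>\<close> that] \<open>0 < \<alpha>\<close> that(1,3) by (intro legal) auto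
  have play: "legal_play K \<beta> A b"
    if "fst (b 0) \<in> K" "0 < snd (b 0)" "\<forall>k j. j < k \<longrightarrow> legal_move K \<beta> (A (b j)) (b (Suc j))"
    for \<beta> b
    using that unfolding legal_play_def by (meson lessI)
  show ?thesis
    unfolding alpha_winning_on_def Let_def
    by (intro allI impI exI[of _ "\<lambda>l. A (last l)"]) (auto intro: alice wins play)
qed

lemma alpha_winning_on_empty: "alpha_winning_on {} \<alpha> S"
  unfolding alpha_winning_on_def Let_def by auto

locale BA_game =
  fixes K :: "real set" and \<alpha> \<rho>0 L :: real and \<phi> :: "real \<Rightarrow> real"
  assumes alpha: "0 < \<alpha>" "\<alpha> \<le> 1/2"
    and rho0: "0 < \<rho>0"
    and escape: "\<And>x r y. x \<in> K \<Longrightarrow> 0 < r \<Longrightarrow> r \<le> \<rho>0 \<Longrightarrow>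
      \<exists>x'\<in>K. dist x x' \<le> (1 - \<alpha>) * r \<and> 3 * \<alpha> * r < dist x' y"
    and L: "0 < L"
    and lower: "\<And>s t. \<bar>s - t\<bar> \<le> L * \<bar>\<phi> s - \<phi> t\<bar>"
begin

definition low_height :: "real \<Rightarrow> real \<Rightarrow> bool" where
  "low_height r t \<longleftrightarrow> (\<exists>(p::int) (q::nat). 0 < q \<and> 8 * L * r * (real q)\<^sup>2 \<le> 1 \<and> t = p / q)"

lemma low_height_unique:
  assumes r: "0 < r" and s: "low_height r s" and t: "low_height r t"
    and close: "dist (\<phi> s) (\<phi> t) \<le> 4 * r"
  shows "s = t"
proof (rule ccontr)
  assume "s \<noteq> t"
  from s t obtain p q p' q' where pq: "0 < q" "8 * L * r * (real q)\<^sup>2 \<le> 1" "s = of_int p / q"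
    and pq': "0 < q'" "8 * L * r * (real q')\<^sup>2 \<le> 1" "t = of_int p' / q'"
    unfolding low_height_def by blast
  have "real q * real q' \<le> (max (real q) (real q'))\<^sup>2"
    unfolding power2_eq_square by (intro mult_mono) auto
  moreover have "8 * L * r * (max (real q) (real q'))\<^sup>2 \<le> 1"
    using pq(2) pq'(2) by (simp add: max_def)
  ultimately have "8 * L * r * (real q * real q') \<le> 1"
    using L r by (smt (verit) mult_left_mono zero_le_mult_iff)
  then have "8 * L * r \<le> 1 / (real q * real q')"
    using pq(1) pq'(1) by (simp add: field_simps)
  also have "\<dots> \<le> \<bar>s - t\<bar>"
    using rationals_far_apart[OF pq(1) pq'(1)] \<open>s \<noteq> t\<close> pq(3) pq'(3) by simp
  also have "\<dots> \<le> L * dist (\<phi> s) (\<phi> t)"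
    using lower by (simp add: dist_real_def)
  also have "\<dots> \<le> L * (4 * r)"
    using close L by simp
  finally show False using L r by simp
qed

definition safe_centre :: "real \<Rightarrow> real \<Rightarrow> real \<Rightarrow> bool" where
  "safe_centre x r x' \<longleftrightarrow> x' \<in> K \<and> dist x x' \<le> (1 - \<alpha>) * r \<and>
     (\<forall>t z. low_height r t \<longrightarrow> dist x' z \<le> \<alpha> * r \<longrightarrow> 2 * \<alpha> * r < dist z (\<phi> t))"

lemma safe_centre_exists:
  assumes x: "x \<in> K" and r: "0 < r" "r \<le> \<rho>0"
  shows "\<exists>x'. safe_centre x r x'"
proof -
  have small: "2 * \<alpha> * r \<le> r" "\<alpha> * r \<le> r"
    using mult_right_mono[of "2 * \<alpha>" 1 r] mult_right_mono[of \<alpha> 1 r] alpha r by simp_all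
  have outside: "2 * \<alpha> * r < dist z (\<phi> t)" if "dist x z \<le> r" "2 * r < dist x (\<phi> t)" for z t
    using that small dist_triangle[of x "\<phi> t" z] by (simp add: dist_commute)
  show ?thesis
  proof (cases "\<exists>t0. low_height r t0 \<and> dist x (\<phi> t0) \<le> 2 * r")
    case True
    then obtain t0 where t0: "low_height r t0" "dist x (\<phi> t0) \<le> 2 * r" by blast
    obtain x' where x': "x' \<in> K" "dist x x' \<le> (1 - \<alpha>) * r" "3 * \<alpha> * r < dist x' (\<phi> t0)"
      using escape[OF x r] by blast
    have "2 * \<alpha> * r < dist z (\<phi> t)" if t: "low_height r t" and z: "dist x' z \<le> \<alpha> * r" for t z
    proof (cases "dist x (\<phi> t) \<le> 2 * r")
      case True
      then have "dist (\<phi> t) (\<phi> t0) \<le> 4 * r"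
        using t0(2) dist_triangle[of "\<phi> t" "\<phi> t0" x] by (simp add: dist_commute)
      then have "t = t0" using low_height_unique[OF r(1) t t0(1)] by blast
      with x'(3) z dist_triangle[of x' "\<phi> t" z] show ?thesis by (simp add: dist_commute)
    next
      case False
      moreover have "dist x z \<le> r"
        using x'(2) z dist_triangle[of x z x'] by (simp add: algebra_simps)
      ultimately show ?thesis by (intro outside) auto
    qed
    with x' show ?thesis unfolding safe_centre_def by blast
  next
    case False
    have "2 * \<alpha> * r < dist z (\<phi> t)" if "low_height r t" "dist x z \<le> \<alpha> * r" for t z
      using False that small(2) by (intro outside) auto
    with x small(2) have "safe_centre x r x"
      unfolding safe_centre_def by (simp add: algebra_simps)
    then show ?thesis by blast
  qed
qed

text \<open>Above \<open>\<rho>0\<close> absolute decay gives no information, and Alice merely shrinks Bob's ball.\<close>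

definition alice :: "real \<times> real \<Rightarrow> real \<times> real" where
  "alice w = (if fst w \<in> K \<and> 0 < snd w \<and> snd w \<le> \<rho>0
     then (SOME x'. safe_centre (fst w) (snd w) x', \<alpha> * snd w) else (fst w, \<alpha> * snd w))"

lemma alice_safe_centre:
  assumes "fst w \<in> K" "0 < snd w" "snd w \<le> \<rho>0"
  shows "safe_centre (fst w) (snd w) (fst (alice w))"
  using assms safe_centre_exists[OF assms] by (simp add: alice_def someI_ex)

lemma alice_legal:
  assumes "fst w \<in> K" "0 < snd w"
  shows "legal_move K \<alpha> w (alice w)"
proof (cases "snd w \<le> \<rho>0")
  case True
  have "snd (alice w) = \<alpha> * snd w" by (simp add: alice_def)
  with alice_safe_centre[OF assms True] show ?thesis
    by (simp add: legal_move_def s_le_def safe_centre_def algebra_simps)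
next
  case False
  have "\<alpha> * snd w \<le> 1 * snd w"
    using alpha assms(2) by (intro mult_right_mono) auto
  with False assms show ?thesis by (simp add: legal_move_def s_le_def alice_def)
qed

lemma legal_play_alice:
  assumes "legal_play K \<beta> alice b" "0 < \<beta>"
  shows "fst (b k) \<in> K \<and> snd (b k) = (\<alpha> * \<beta>) ^ k * snd (b 0)"
  by (rule legal_play_prefix[OF alice_legal alpha(1) \<open>0 < \<beta>\<close>])
    (use assms(1) in \<open>simp_all add: legal_play_def\<close>)

lemma outcome_avoids_low_heights:
  assumes play: "legal_play K \<beta> alice b" and "0 < \<beta>"
    and x: "\<And>k. dist (fst (b k)) x \<le> snd (b k)"
    and r: "snd (b k) \<le> \<rho>0" and t: "low_height (snd (b k)) t"
  shows "2 * \<alpha> * snd (b k) < dist x (\<phi> t)"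
proof -
  have bob: "legal_move K \<beta> (alice (b j)) (b (Suc j))" for j
    using play by (simp add: legal_play_def)
  have "0 < snd (b 0)" using play by (simp add: legal_play_def)
  with legal_play_alice[OF play \<open>0 < \<beta>\<close>, of k] alpha(1) \<open>0 < \<beta>\<close>
  have bk: "fst (b k) \<in> K" "0 < snd (b k)" by simp_all
  then have "snd (alice (b k)) = \<alpha> * snd (b k)"
    using alice_legal[OF bk] by (simp add: legal_move_def)
  with bob[of k] x[of "Suc k"] dist_triangle[of "fst (alice (b k))" x "fst (b (Suc k))"]
  have "dist (fst (alice (b k))) x \<le> \<alpha> * snd (b k)"
    by (simp add: legal_move_def s_le_def)
  with alice_safe_centre[OF bk r] t show ?thesis unfolding safe_centre_def by blast
qed

lemma legal_play_radius_at_denominator: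
  assumes play: "legal_play K \<beta> alice b" and \<beta>: "0 < \<beta>" "\<beta> < 1" and q: "0 < q"
  obtains k where "snd (b k) \<le> \<rho>0" "8 * L * snd (b k) * (real q)\<^sup>2 \<le> 1"
    "\<alpha> * \<beta> * min (min (snd (b 0)) \<rho>0) (1 / (8 * L)) / (real q)\<^sup>2 \<le> snd (b k)"
proof -
  define r0 c m s where "r0 = snd (b 0)" and "c = \<alpha> * \<beta>"
    and "m = min (min r0 \<rho>0) (1 / (8 * L))" and "s = min \<rho>0 (1 / (8 * L * (real q)\<^sup>2))"
  have r0: "0 < r0" using play by (simp add: legal_play_def r0_def)
  have c: "0 < c" "c < 1"
    using alpha \<beta> mult_strict_mono[of \<alpha> 1 \<beta> 1] by (auto simp: c_def)
  have radius: "snd (b k) = c ^ k * r0" for k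
    using legal_play_alice[OF play \<beta>(1), of k] by (simp add: c_def r0_def)
  have "0 < s" using rho0 L q by (simp add: s_def)
  then obtain k where k: "c ^ k * r0 \<le> s" "c * min r0 s \<le> c ^ k * r0"
    using geometric_radius_at_scale[OF c r0] by blast
  have "0 < m" using r0 rho0 L by (simp add: m_def)
  moreover have "1 \<le> (real q)\<^sup>2" using q by simp
  ultimately have "m * 1 \<le> m * (real q)\<^sup>2" by (intro mult_left_mono) auto
  then have "m / (real q)\<^sup>2 \<le> m" using q by (simp add: divide_le_eq)
  moreover have "m / (real q)\<^sup>2 \<le> 1 / (8 * L * (real q)\<^sup>2)"
    using divide_right_mono[of m "1 / (8 * L)" "(real q)\<^sup>2"] by (simp add: m_def)
  ultimately have "m / (real q)\<^sup>2 \<le> min r0 s"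
    by (simp add: m_def s_def)
  then have "c * (m / (real q)\<^sup>2) \<le> c * min r0 s"
    using c by (intro mult_left_mono) auto
  with k(2) have "c * m / (real q)\<^sup>2 \<le> snd (b k)" by (simp add: radius)
  moreover have "snd (b k) * (8 * L * (real q)\<^sup>2) \<le> 1 / (8 * L * (real q)\<^sup>2) * (8 * L * (real q)\<^sup>2)"
    using k(1) L by (intro mult_right_mono) (auto simp: radius s_def)
  then have "8 * L * snd (b k) * (real q)\<^sup>2 \<le> 1"
    using q L by (simp add: algebra_simps)
  moreover have "snd (b k) \<le> \<rho>0" using k(1) by (simp add: radius s_def)
  ultimately show thesis using that by (simp add: c_def m_def r0_def)
qed

lemma outcome_bad_approx:
  assumes play: "legal_play K \<beta> alice b" and \<beta>: "0 < \<beta>" "\<beta> < 1"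
    and x: "\<And>k. dist (fst (b k)) x \<le> snd (b k)"
  shows "x \<in> bad_approx_by \<phi>"
proof -
  define m where "m = \<alpha> * \<beta> * min (min (snd (b 0)) \<rho>0) (1 / (8 * L))"
  have "0 < m" using play alpha \<beta> rho0 L by (simp add: m_def legal_play_def)
  moreover have "2 * \<alpha> * (m / (real q)\<^sup>2) < dist x (\<phi> (p / q))" if q: "0 < q" for p :: int and q :: nat
  proof -
    obtain k where k: "snd (b k) \<le> \<rho>0" "8 * L * snd (b k) * (real q)\<^sup>2 \<le> 1"
        "m / (real q)\<^sup>2 \<le> snd (b k)"
      using legal_play_radius_at_denominator[OF play \<beta> q] unfolding m_def by blast
    from k(2) q have "low_height (snd (b k)) (p / q)"
      unfolding low_height_def by auto
    with k(1) have "2 * \<alpha> * snd (b k) < dist x (\<phi> (p / q))"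
      by (intro outcome_avoids_low_heights[OF play \<beta>(1) x])
    moreover have "2 * \<alpha> * (m / (real q)\<^sup>2) \<le> 2 * \<alpha> * snd (b k)"
      using k(3) alpha(1) by (intro mult_left_mono) auto
    ultimately show ?thesis by linarith
  qed
  ultimately show ?thesis
    using alpha(1) unfolding bad_approx_by_def by (intro CollectI exI[of _ "2 * \<alpha> * m"]) simp
qed

theorem alpha_winning_on_superset_bad_approx:
  assumes "bad_approx_by \<phi> \<subseteq> S"
  shows "alpha_winning_on K \<alpha> S"
proof (rule alpha_winning_on_positional[OF alpha(1) alice_legal])
  fix \<beta> b x
  assume "0 < \<beta>" "\<beta> < 1" "legal_play K \<beta> alice b" "\<And>k. dist (fst (b k)) x \<le> snd (b k)"
  then show "x \<in> S" using outcome_bad_approx assms by blast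
qed

end

theorem theorem4p1:
  fixes M :: "real measure" and C \<gamma> \<alpha> :: real and \<phi> :: "real \<Rightarrow> real"
  assumes "locally_finite_borel M"
    and "C > 0" and "\<gamma> > 0"
    and "abs_decaying M C \<gamma>"
    and "0 < \<alpha>" and "\<alpha> \<le> (1/4) * (1 / (3 * C)) powr (1 / \<gamma>)"
    and "bi_lipschitz \<phi>"
  shows "alpha_winning_on (msupp M) \<alpha> (\<phi> ` BA)"
proof (cases "msupp M = {}")
  case True
  then show ?thesis by (simp add: alpha_winning_on_empty)
next
  case False
  have sets: "sets M = sets borel"
    using assms(1) by (simp add: locally_finite_borel_def)
  obtain \<rho>0 where \<rho>0: "0 < \<rho>0" and decay: "abs_decaying_upto M C \<gamma> \<rho>0"
    using assms(4) by (auto simp: abs_decaying_iff)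
  obtain L where L: "1 \<le> L" and lower: "\<And>s t. \<bar>s - t\<bar> \<le> L * \<bar>\<phi> s - \<phi> t\<bar>"
    and upper: "\<And>s t. \<bar>\<phi> s - \<phi> t\<bar> \<le> L * \<bar>s - t\<bar>"
    using bi_lipschitz_bounds[OF assms(7)] by blast
  from False decay \<rho>0 have "1 < C"
    by (auto intro: abs_decaying_upto_const_gt_1)
  with assms(3,6) have "\<alpha> \<le> 1/4"
    using powr_le1[of "1 / \<gamma>" "1 / (3 * C)"] by simp
  interpret BA_game "msupp M" \<alpha> \<rho>0 L \<phi>
    using assms(2,3,5,6) \<open>\<alpha> \<le> 1/4\<close> \<rho>0 L lower
    by unfold_locales (auto intro: abs_decaying_upto_escape_ball[OF sets decay])
  show ?thesis
    using bi_lipschitz_surj[OF assms(7)] L upper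
    by (intro alpha_winning_on_superset_bad_approx bad_approx_by_subset_image_BA) auto
qed

end
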